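(* For $k\ge 1$, rectangular reduction gives a bijection $\mathrm{red}:\mathcal M^{\circ}_{2k}\to\mathcal N_{k,0}\cup\mathcal N_{k,1}$. Consequently $M^\circ_{2k} = N_{k,0}+N_{k,1} = N_k - N_{k,2}$.
   Context: Colorings. Each square is colored water or land. Two distinct squares are adjacent if they share an edge after all edge identifications; a set of squares is connected if its induced adjacency graph is connected (empty set counts as connected). (N1): the water is connected. (N2$\circ$): no interior (non-boundary) vertex of the tiling has all of the squares incident to it water. A $2\times k$ Nurikabe rectangle is a coloring of the $2\times k$ grid (columns $1,\dots,k$ left to right, no identifications) with connected water and no $2\times 2$ block of water squares; $\mathcal N_k$ is the set of these, $N_k=|\mathcal N_k|$; $\mathcal N_{k,i}$ is the subset with exactly $i$ water squares in column $k$, $N_{k,i}=|\mathcal N_{k,i}|$. Tile $[0,n]\times[0,1]$ by unit squares $[j-1,j]\times[0,1]$, called square $j$. The $1\times n$ Möbius strip identifies $(x,1)\sim(n-x,0)$ for $x\in[0,n]$; its boundary is the image of the vertical sides. $\mathcal M^\circ_n$ is the set of colorings of the $1\times n$ Möbius strip satisfying (N1) and (N2$\circ$), $M^\circ_n=|\mathcal M^\circ_n|$. Rectangular reduction: for a coloring of the $1\times 2k$ Möbius strip, $\mathrm{red}$ gives the coloring of the $2\times k$ grid whose column $j$ ($1\le j\le k$) has top square colored as square $j$ and bottom square colored as square $2k+1-j$. *)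

theory Defs
  imports Main "HOL-Library.FuncSet"
begin

datatype color = Water | Land

definition induced_connected :: "('a \<Rightarrow> 'a \<Rightarrow> bool) \<Rightarrow> 'a set \<Rightarrow> bool" where
  "induced_connected adj S \<longleftrightarrow>
     (\<forall>x\<in>S. \<forall>y\<in>S. (x, y) \<in> {(u, v). u \<in> S \<and> v \<in> S \<and> adj u v}\<^sup>*)"

text \<open>Square j (1 <= j <= n) is [j-1,j] x [0,1].  Edges: vertical edge VE a is the
  segment {a} x [0,1]; HE s 0 / HE s 1 are the bottom / top sides of square s.
  The identification (x,1) ~ (n-x,0) maps the top side of square s onto the bottom
  side of square n+1-s; vertical edges are not identified with anything.\<close>
datatype edge = VE nat | HE nat nat

definition mob_edges_of :: "nat \<Rightarrow> edge set" where
  "mob_edges_of s = {VE (s - 1), VE s, HE s 0, HE s 1}"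

fun mob_edge_canon :: "nat \<Rightarrow> edge \<Rightarrow> edge" where
  "mob_edge_canon n (VE a) = VE a"
| "mob_edge_canon n (HE s b) = (if b = 1 then HE (n + 1 - s) 0 else HE s 0)"

definition mob_adj :: "nat \<Rightarrow> nat \<Rightarrow> nat \<Rightarrow> bool" where
  "mob_adj n i j \<longleftrightarrow> i \<in> {1..n} \<and> j \<in> {1..n} \<and> i \<noteq> j \<and>
     (\<exists>e\<in>mob_edges_of i. \<exists>e'\<in>mob_edges_of j. mob_edge_canon n e = mob_edge_canon n e')"

text \<open>Vertices: grid points (a,b) with a \<in> {0..n}, b \<in> {0,1}; (a,1) ~ (n-a,0).
  Each vertex class is represented by its point on y = 0.\<close>
definition mob_vcanon :: "nat \<Rightarrow> nat \<times> nat \<Rightarrow> nat \<times> nat" where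
  "mob_vcanon n p = (if snd p = 1 then (n - fst p, 0) else (fst p, 0))"

definition mob_points :: "nat \<Rightarrow> (nat \<times> nat) set" where
  "mob_points n = {0..n} \<times> {0, 1}"

definition mob_vertices :: "nat \<Rightarrow> (nat \<times> nat) set" where
  "mob_vertices n = mob_vcanon n ` mob_points n"

definition mob_boundary_vertex :: "nat \<Rightarrow> nat \<times> nat \<Rightarrow> bool" where
  "mob_boundary_vertex n v \<longleftrightarrow>
     (\<exists>p\<in>mob_points n. mob_vcanon n p = v \<and> (fst p = 0 \<or> fst p = n))"

definition mob_corners :: "nat \<Rightarrow> (nat \<times> nat) set" where
  "mob_corners s = {(s - 1, 0), (s, 0), (s - 1, 1), (s, 1)}"

definition mob_incident :: "nat \<Rightarrow> nat \<times> nat \<Rightarrow> nat set" where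
  "mob_incident n v = {s \<in> {1..n}. \<exists>p\<in>mob_corners s. mob_vcanon n p = v}"

definition mob_water :: "nat \<Rightarrow> (nat \<Rightarrow> color) \<Rightarrow> nat set" where
  "mob_water n f = {s \<in> {1..n}. f s = Water}"

definition Mob_circ :: "nat \<Rightarrow> (nat \<Rightarrow> color) set" where
  "Mob_circ n = {f \<in> {1..n} \<rightarrow>\<^sub>E UNIV.
      induced_connected (mob_adj n) (mob_water n f) \<and>
      (\<forall>v\<in>mob_vertices n. \<not> mob_boundary_vertex n v \<longrightarrow>
          \<not> (\<forall>s\<in>mob_incident n v. f s = Water))}"

text \<open>Squares (r, c): row r \<in> {0,1} (0 = top, 1 = bottom), column c \<in> {1..k}.\<close>
definition grid :: "nat \<Rightarrow> (nat \<times> nat) set" where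
  "grid k = {0, 1} \<times> {1..k}"

definition grid_adj :: "nat \<Rightarrow> nat \<times> nat \<Rightarrow> nat \<times> nat \<Rightarrow> bool" where
  "grid_adj k p q \<longleftrightarrow> p \<in> grid k \<and> q \<in> grid k \<and>
     ((snd p = snd q \<and> fst p \<noteq> fst q) \<or>
      (fst p = fst q \<and> (snd q = snd p + 1 \<or> snd p = snd q + 1)))"

definition grid_water :: "nat \<Rightarrow> (nat \<times> nat \<Rightarrow> color) \<Rightarrow> (nat \<times> nat) set" where
  "grid_water k g = {p \<in> grid k. g p = Water}"

definition Nurikabe :: "nat \<Rightarrow> (nat \<times> nat \<Rightarrow> color) set" where
  "Nurikabe k = {g \<in> grid k \<rightarrow>\<^sub>E UNIV.
      induced_connected (grid_adj k) (grid_water k g) \<and>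
      \<not> (\<exists>c. 1 \<le> c \<and> c + 1 \<le> k \<and>
            g (0, c) = Water \<and> g (1, c) = Water \<and>
            g (0, c + 1) = Water \<and> g (1, c + 1) = Water)}"

definition Nurikabe_i :: "nat \<Rightarrow> nat \<Rightarrow> (nat \<times> nat \<Rightarrow> color) set" where
  "Nurikabe_i k i = {g \<in> Nurikabe k. card {r \<in> {0, 1::nat}. g (r, k) = Water} = i}"

definition red :: "nat \<Rightarrow> (nat \<Rightarrow> color) \<Rightarrow> (nat \<times> nat \<Rightarrow> color)" where
  "red k f = restrict (\<lambda>(r, c). if r = 0 then f c else f (2 * k + 1 - c)) (grid k)"

end

theory Submission
  imports Defs
begin

text \<open>Folding the 1 x 2k Moebius strip along its middle line x = k puts square j on top of
  square 2k+1-j, which is rectangular reduction. The fold is a bijection between the squares of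
  the strip and those of the 2 x k grid under which the neighbours j, j+1 along the strip and the
  neighbours j, 2k+1-j glued by the identification become exactly the grid neighbours, so (N1)
  for the strip is connectivity of water in the rectangle. The interior vertex a, 0 < a < 2k,
  of the strip touches the squares a, a+1, 2k-a, 2k+1-a: for a \<noteq> k these form a 2 x 2 block of
  the rectangle, for a = k they are the two squares of column k. So (N2\<degree>) says that the
  rectangle has no 2 x 2 water block and at most one water square in column k.\<close>

lemma induced_connected_image:
  assumes "induced_connected adj S"
    and "\<And>x y. x \<in> S \<Longrightarrow> y \<in> S \<Longrightarrow> adj x y \<Longrightarrow> adj' (h x) (h y)"
  shows "induced_connected adj' (h ` S)"
  unfolding induced_connected_def
proof (intro ballI)
  fix x' y' assume "x' \<in> h ` S" "y' \<in> h ` S"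
  then obtain x y where xy: "x \<in> S" "y \<in> S" "x' = h x" "y' = h y" by blast
  have "(x, y) \<in> {(u, v). u \<in> S \<and> v \<in> S \<and> adj u v}\<^sup>*"
    using assms(1) xy unfolding induced_connected_def by blast
  then have "(h x, h y) \<in> {(u, v). u \<in> h ` S \<and> v \<in> h ` S \<and> adj' u v}\<^sup>*"
  proof (induction rule: rtrancl_induct)
    case base
    then show ?case by simp
  next
    case (step y z)
    then have "(h y, h z) \<in> {(u, v). u \<in> h ` S \<and> v \<in> h ` S \<and> adj' u v}"
      using assms(2) by auto
    with step.IH show ?case by (rule rtrancl_into_rtrancl)
  qed
  then show "(x', y') \<in> {(u, v). u \<in> h ` S \<and> v \<in> h ` S \<and> adj' u v}\<^sup>*"
    using xy by simp
qed

lemma induced_connected_bij_betw_iff: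
  assumes h: "bij_betw h S T"
    and adj: "\<And>x y. x \<in> S \<Longrightarrow> y \<in> S \<Longrightarrow> adj' (h x) (h y) \<longleftrightarrow> adj x y"
  shows "induced_connected adj' T \<longleftrightarrow> induced_connected adj S"
proof
  assume "induced_connected adj S"
  then have "induced_connected adj' (h ` S)"
    by (rule induced_connected_image) (simp add: adj)
  then show "induced_connected adj' T"
    using bij_betw_imp_surj_on[OF h] by simp
next
  assume "induced_connected adj' T"
  then have "induced_connected adj (inv_into S h ` T)"
  proof (rule induced_connected_image)
    fix x y assume "x \<in> T" "y \<in> T" "adj' x y"
    then show "adj (inv_into S h x) (inv_into S h y)"
      using h adj bij_betw_inv_into_right[OF h] bij_betw_apply[OF bij_betw_inv_into[OF h]]
      by metis
  qed
  then show "induced_connected adj S"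
    using bij_betw_imp_surj_on[OF bij_betw_inv_into[OF h]] by simp
qed

lemma bij_betw_restrict_comp_PiE:
  assumes h: "bij_betw h A B"
  shows "bij_betw (\<lambda>f. restrict (f \<circ> h) A) (B \<rightarrow>\<^sub>E C) (A \<rightarrow>\<^sub>E C)"
proof (rule bij_betw_byWitness[where f' = "\<lambda>g. restrict (g \<circ> inv_into A h) B"])
  have h': "bij_betw (inv_into A h) B A"
    by (rule bij_betw_inv_into[OF h])
  show "\<forall>f\<in>B \<rightarrow>\<^sub>E C. restrict (restrict (f \<circ> h) A \<circ> inv_into A h) B = f"
  proof (intro ballI ext)
    fix f y assume f: "f \<in> B \<rightarrow>\<^sub>E C"
    show "restrict (restrict (f \<circ> h) A \<circ> inv_into A h) B y = f y"
    proof (cases "y \<in> B")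
      case True
      then show ?thesis
        using bij_betw_inv_into_right[OF h True] bij_betw_apply[OF h' True] by simp
    qed (simp add: PiE_arb[OF f])
  qed
  show "\<forall>g\<in>A \<rightarrow>\<^sub>E C. restrict (restrict (g \<circ> inv_into A h) B \<circ> h) A = g"
  proof (intro ballI ext)
    fix g x assume g: "g \<in> A \<rightarrow>\<^sub>E C"
    show "restrict (restrict (g \<circ> inv_into A h) B \<circ> h) A x = g x"
    proof (cases "x \<in> A")
      case True
      then show ?thesis
        using bij_betw_inv_into_left[OF h True] bij_betw_apply[OF h True] by simp
    qed (simp add: PiE_arb[OF g])
  qed
  show "(\<lambda>f. restrict (f \<circ> h) A) ` (B \<rightarrow>\<^sub>E C) \<subseteq> A \<rightarrow>\<^sub>E C"
    using bij_betw_apply[OF h] by auto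
  show "(\<lambda>g. restrict (g \<circ> inv_into A h) B) ` (A \<rightarrow>\<^sub>E C) \<subseteq> B \<rightarrow>\<^sub>E C"
    using bij_betw_apply[OF h'] by auto
qed

definition strip_square :: "nat \<Rightarrow> nat \<times> nat \<Rightarrow> nat" where
  "strip_square k p = (if fst p = 0 then snd p else 2 * k + 1 - snd p)"

lemma bij_betw_strip_square: "bij_betw (strip_square k) (grid k) {1..2 * k}"
  by (rule bij_betw_byWitness[where f' = "\<lambda>s. if s \<le> k then (0, s) else (1, 2 * k + 1 - s)"])
    (auto simp: grid_def strip_square_def)

lemma red_eq_restrict_comp: "red k f = restrict (f \<circ> strip_square k) (grid k)"
  unfolding red_def strip_square_def by (rule ext) (auto split: prod.splits)

lemma red_apply: "p \<in> grid k \<Longrightarrow> red k f p = f (strip_square k p)"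
  by (simp add: red_eq_restrict_comp)

lemma bij_betw_red: "bij_betw (red k) ({1..2 * k} \<rightarrow>\<^sub>E UNIV) (grid k \<rightarrow>\<^sub>E UNIV)"
  unfolding red_eq_restrict_comp[abs_def]
  by (rule bij_betw_restrict_comp_PiE[OF bij_betw_strip_square])

lemma mob_adj_iff:
  "mob_adj n i j \<longleftrightarrow> i \<in> {1..n} \<and> j \<in> {1..n} \<and> i \<noteq> j \<and> (j = i + 1 \<or> i = j + 1 \<or> i + j = n + 1)"
  unfolding mob_adj_def mob_edges_of_def by auto

lemma mob_adj_strip_square_iff:
  "p \<in> grid k \<Longrightarrow> q \<in> grid k \<Longrightarrow>
    mob_adj (2 * k) (strip_square k p) (strip_square k q) \<longleftrightarrow> grid_adj k p q"
  unfolding mob_adj_iff grid_adj_def grid_def strip_square_def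
  by (cases p; cases q) auto

lemma bij_betw_grid_water_red:
  "bij_betw (strip_square k) (grid_water k (red k f)) (mob_water (2 * k) f)"
proof (rule bij_betw_subset[OF bij_betw_strip_square])
  show "grid_water k (red k f) \<subseteq> grid k"
    by (simp add: grid_water_def)
  have "strip_square k ` grid_water k (red k f) =
      strip_square k ` {p \<in> grid k. f (strip_square k p) = Water}"
    by (auto simp: grid_water_def red_apply)
  also have "\<dots> = {s \<in> strip_square k ` grid k. f s = Water}"
    by blast
  also have "\<dots> = mob_water (2 * k) f"
    using bij_betw_imp_surj_on[OF bij_betw_strip_square] by (simp add: mob_water_def)
  finally show "strip_square k ` grid_water k (red k f) = mob_water (2 * k) f" .
qed

lemma mob_connected_iff_red:
  "induced_connected (mob_adj (2 * k)) (mob_water (2 * k) f) \<longleftrightarrow>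
    induced_connected (grid_adj k) (grid_water k (red k f))"
  by (rule induced_connected_bij_betw_iff[OF bij_betw_grid_water_red])
    (simp add: grid_water_def mob_adj_strip_square_iff)

lemma mob_interior_vertex_iff:
  "v \<in> mob_vertices n \<and> \<not> mob_boundary_vertex n v \<longleftrightarrow> (\<exists>a\<in>{0<..<n}. v = (a, 0))"
proof -
  have vertices: "mob_vertices n = (\<lambda>a. (a, 0)) ` {0..n}"
    unfolding mob_vertices_def mob_points_def mob_vcanon_def by (force simp: image_iff)
  have boundary: "mob_boundary_vertex n (a, 0) \<longleftrightarrow> a = 0 \<or> a = n" if "a \<le> n" for a
    unfolding mob_boundary_vertex_def mob_points_def mob_vcanon_def
    using that by (auto intro: bexI[of _ "(0, 0)"] bexI[of _ "(n, 0)"])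
  show ?thesis
    unfolding vertices using boundary by auto
qed

lemma mob_incident_interior:
  "a \<in> {0<..<n} \<Longrightarrow> mob_incident n (a, 0) = {a, a + 1, n - a, n + 1 - a}"
  unfolding mob_incident_def mob_corners_def mob_vcanon_def by auto

lemma mob_N2_iff:
  "(\<forall>v\<in>mob_vertices n. \<not> mob_boundary_vertex n v \<longrightarrow> \<not> (\<forall>s\<in>mob_incident n v. f s = Water))
    \<longleftrightarrow> (\<forall>a\<in>{0<..<n}. \<exists>s\<in>{a, a + 1, n - a, n + 1 - a}. f s \<noteq> Water)"
proof -
  have "(\<forall>v\<in>mob_vertices n. \<not> mob_boundary_vertex n v \<longrightarrow> \<not> (\<forall>s\<in>mob_incident n v. f s = Water))
      \<longleftrightarrow> (\<forall>a\<in>{0<..<n}. \<exists>s\<in>mob_incident n (a, 0). f s \<noteq> Water)"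
    by (simp only: Ball_def imp_conjL[symmetric] mob_interior_vertex_iff) auto
  also have "\<dots> \<longleftrightarrow> (\<forall>a\<in>{0<..<n}. \<exists>s\<in>{a, a + 1, n - a, n + 1 - a}. f s \<noteq> Water)"
    by (rule ball_cong) (simp_all add: mob_incident_interior)
  finally show ?thesis .
qed

lemma strip_square_block:
  "c \<in> {0<..<k} \<Longrightarrow> strip_square k ` ({0, 1} \<times> {c, c + 1}) = {c, c + 1, 2 * k - c, 2 * k + 1 - c}"
  by (auto simp: strip_square_def)

lemma strip_square_last_column:
  "strip_square k ` ({0, 1} \<times> {k}) = {k, k + 1, 2 * k - k, 2 * k + 1 - k}"
  by (auto simp: strip_square_def)

lemma bex_strip_square_red:
  assumes "B \<subseteq> grid k"
  shows "(\<exists>s\<in>strip_square k ` B. f s \<noteq> Water) \<longleftrightarrow> (\<exists>p\<in>B. red k f p \<noteq> Water)"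
proof -
  have "red k f p = f (strip_square k p)" if "p \<in> B" for p
    using that assms by (auto intro: red_apply)
  then show ?thesis
    by auto
qed

lemma ball_fold_at_middle:
  fixes P :: "nat \<Rightarrow> bool"
  assumes mirror: "\<And>a. a \<in> {0<..<2 * k} \<Longrightarrow> P (2 * k - a) \<longleftrightarrow> P a"
  shows "(\<forall>a\<in>{0<..<2 * k}. P a) \<longleftrightarrow> (\<forall>c\<in>{0<..<k}. P c) \<and> (0 < k \<longrightarrow> P k)"
proof
  assume "\<forall>a\<in>{0<..<2 * k}. P a"
  then show "(\<forall>c\<in>{0<..<k}. P c) \<and> (0 < k \<longrightarrow> P k)"
    by auto
next
  assume half: "(\<forall>c\<in>{0<..<k}. P c) \<and> (0 < k \<longrightarrow> P k)"
  show "\<forall>a\<in>{0<..<2 * k}. P a"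
  proof
    fix a assume a: "a \<in> {0<..<2 * k}"
    consider "a < k" | "a = k" | "k < a"
      by linarith
    then show "P a"
    proof cases
      case 3
      then have "2 * k - a \<in> {0<..<k}"
        using a by auto
      with half mirror[OF a] show ?thesis
        by blast
    qed (use a half in auto)
  qed
qed

lemma mob_N2_iff_red:
  assumes "0 < k"
  shows "(\<forall>a\<in>{0<..<2 * k}. \<exists>s\<in>{a, a + 1, 2 * k - a, 2 * k + 1 - a}. f s \<noteq> Water) \<longleftrightarrow>
    (\<forall>c\<in>{0<..<k}. \<exists>p\<in>{0, 1} \<times> {c, c + 1}. red k f p \<noteq> Water) \<and>
    (\<exists>p\<in>{0, 1} \<times> {k}. red k f p \<noteq> Water)"
proof -
  define V where "V a = {a, a + 1, 2 * k - a, 2 * k + 1 - a}" for a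
  have "V (2 * k - a) = V a" if "a \<in> {0<..<2 * k}" for a
    using that by (auto simp: V_def)
  then have "(\<forall>a\<in>{0<..<2 * k}. \<exists>s\<in>V a. f s \<noteq> Water) \<longleftrightarrow>
      (\<forall>c\<in>{0<..<k}. \<exists>s\<in>V c. f s \<noteq> Water) \<and> (\<exists>s\<in>V k. f s \<noteq> Water)"
    using ball_fold_at_middle[of k "\<lambda>a. \<exists>s\<in>V a. f s \<noteq> Water"] assms by simp
  moreover have "(\<exists>s\<in>V c. f s \<noteq> Water) \<longleftrightarrow> (\<exists>p\<in>{0, 1} \<times> {c, c + 1}. red k f p \<noteq> Water)"
    if "c \<in> {0<..<k}" for c
    using strip_square_block[OF that] bex_strip_square_red[of "{0, 1} \<times> {c, c + 1}" k f] that
    by (auto simp: V_def grid_def)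
  moreover have "(\<exists>s\<in>V k. f s \<noteq> Water) \<longleftrightarrow> (\<exists>p\<in>{0, 1} \<times> {k}. red k f p \<noteq> Water)"
    using strip_square_last_column[of k] bex_strip_square_red[of "{0, 1} \<times> {k}" k f] assms
    by (auto simp: V_def grid_def)
  ultimately show ?thesis
    by (simp add: V_def)
qed

lemma card_Collect_0_1:
  "card {r \<in> {0, 1::nat}. P r} = of_bool (P 0) + of_bool (P 1)"
proof -
  have "{r \<in> {0, 1::nat}. P r} = {r. r = 0 \<and> P 0} \<union> {r. r = 1 \<and> P 1}"
    by auto
  then show ?thesis
    by (cases "P 0"; cases "P 1") auto
qed

lemma Nurikabe_iff:
  "g \<in> Nurikabe k \<longleftrightarrow> g \<in> grid k \<rightarrow>\<^sub>E UNIV \<and> induced_connected (grid_adj k) (grid_water k g) \<and>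
    (\<forall>c\<in>{0<..<k}. \<exists>p\<in>{0, 1} \<times> {c, c + 1}. g p \<noteq> Water)"
  unfolding Nurikabe_def by auto

lemma Nurikabe_i_0_Un_1:
  "Nurikabe_i k 0 \<union> Nurikabe_i k 1 = {g \<in> Nurikabe k. \<exists>p\<in>{0, 1} \<times> {k}. g p \<noteq> Water}"
  unfolding Nurikabe_i_def card_Collect_0_1 by auto

lemma Nurikabe_eq_Un_Nurikabe_i:
  "Nurikabe k = Nurikabe_i k 0 \<union> Nurikabe_i k 1 \<union> Nurikabe_i k 2"
  unfolding Nurikabe_i_def card_Collect_0_1 by auto

instance color :: finite
proof
  have UNIV_color: "(UNIV :: color set) = {Water, Land}"
    using color.exhaust by auto
  show "finite (UNIV :: color set)"
    unfolding UNIV_color by simp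
qed

lemma finite_Nurikabe_i: "finite (Nurikabe_i k i)"
proof (rule finite_subset)
  show "Nurikabe_i k i \<subseteq> grid k \<rightarrow>\<^sub>E UNIV"
    by (auto simp: Nurikabe_i_def Nurikabe_def)
  show "finite (grid k \<rightarrow>\<^sub>E (UNIV :: color set))"
    by (intro finite_PiE) (simp_all add: grid_def)
qed

lemma disjoint_Nurikabe_i: "i \<noteq> j \<Longrightarrow> Nurikabe_i k i \<inter> Nurikabe_i k j = {}"
  by (auto simp: Nurikabe_i_def)

lemma card_Nurikabe_i_0_Un_1:
  "card (Nurikabe_i k 0 \<union> Nurikabe_i k 1) = card (Nurikabe_i k 0) + card (Nurikabe_i k 1)"
  by (simp add: card_Un_disjoint finite_Nurikabe_i disjoint_Nurikabe_i)

lemma card_Nurikabe: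
  "card (Nurikabe k) = card (Nurikabe_i k 0) + card (Nurikabe_i k 1) + card (Nurikabe_i k 2)"
proof -
  have "card (Nurikabe k) = card (Nurikabe_i k 0 \<union> Nurikabe_i k 1) + card (Nurikabe_i k 2)"
    unfolding Nurikabe_eq_Un_Nurikabe_i
    using disjoint_Nurikabe_i[of 0 2 k] disjoint_Nurikabe_i[of 1 2 k]
    by (intro card_Un_disjoint) (auto simp: finite_Nurikabe_i)
  then show ?thesis
    by (simp only: card_Nurikabe_i_0_Un_1)
qed

lemma Mob_circ_iff_red:
  assumes "0 < k" and f: "f \<in> {1..2 * k} \<rightarrow>\<^sub>E UNIV"
  shows "f \<in> Mob_circ (2 * k) \<longleftrightarrow> red k f \<in> Nurikabe_i k 0 \<union> Nurikabe_i k 1"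
proof -
  have "red k f \<in> grid k \<rightarrow>\<^sub>E UNIV"
    by (rule bij_betw_apply[OF bij_betw_red f])
  then show ?thesis
    unfolding Mob_circ_def Nurikabe_i_0_Un_1 mem_Collect_eq Nurikabe_iff mob_N2_iff
      mob_N2_iff_red[OF assms(1)] mob_connected_iff_red
    using f by auto
qed

lemma red_image_Mob_circ:
  assumes "0 < k"
  shows "red k ` Mob_circ (2 * k) = Nurikabe_i k 0 \<union> Nurikabe_i k 1"
proof
  show "red k ` Mob_circ (2 * k) \<subseteq> Nurikabe_i k 0 \<union> Nurikabe_i k 1"
    using Mob_circ_iff_red[OF assms] by (auto simp: Mob_circ_def)
next
  show "Nurikabe_i k 0 \<union> Nurikabe_i k 1 \<subseteq> red k ` Mob_circ (2 * k)"
  proof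
    fix g assume g: "g \<in> Nurikabe_i k 0 \<union> Nurikabe_i k 1"
    then have "g \<in> red k ` ({1..2 * k} \<rightarrow>\<^sub>E UNIV)"
      using bij_betw_imp_surj_on[OF bij_betw_red] by (auto simp: Nurikabe_i_def Nurikabe_def)
    then obtain f where "f \<in> {1..2 * k} \<rightarrow>\<^sub>E UNIV" "g = red k f"
      by blast
    with g show "g \<in> red k ` Mob_circ (2 * k)"
      using Mob_circ_iff_red[OF assms] by blast
  qed
qed

lemma bij_betw_red_Mob_circ:
  "0 < k \<Longrightarrow> bij_betw (red k) (Mob_circ (2 * k)) (Nurikabe_i k 0 \<union> Nurikabe_i k 1)"
  by (rule bij_betw_subset[OF bij_betw_red _ red_image_Mob_circ]) (auto simp: Mob_circ_def)

theorem lemma5p1: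
  fixes k :: nat
  assumes "k \<ge> 1"
  shows "bij_betw (red k) (Mob_circ (2 * k)) (Nurikabe_i k 0 \<union> Nurikabe_i k 1)
    \<and> card (Mob_circ (2 * k)) = card (Nurikabe_i k 0) + card (Nurikabe_i k 1)
    \<and> card (Mob_circ (2 * k)) = card (Nurikabe k) - card (Nurikabe_i k 2)"
proof -
  have bij: "bij_betw (red k) (Mob_circ (2 * k)) (Nurikabe_i k 0 \<union> Nurikabe_i k 1)"
    using assms by (intro bij_betw_red_Mob_circ) simp
  have "card (Mob_circ (2 * k)) = card (Nurikabe_i k 0 \<union> Nurikabe_i k 1)"
    by (rule bij_betw_same_card[OF bij])
  also have "\<dots> = card (Nurikabe_i k 0) + card (Nurikabe_i k 1)"
    by (rule card_Nurikabe_i_0_Un_1)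
  finally show ?thesis
    using bij
    by (simp add: card_Nurikabe)
qed

end
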